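(* Let $F$ be a generalized fanout. Then the set $\{F,\text{free terminal}\}$ parsimoniously simulates, via planar simulations: (1) the NOT gate; (2) every generalized fanout $F'$; (3) the $k$-way fanout gate for every $k\ge 1$.
   Context: A gadget consists of a finite set of ports, equipped with a cyclic order, and a constraint, which is a set of subsets of the ports. A network of gadgets from $S$ is a finite undirected multigraph whose vertices are labeled by gadgets from $S$, each vertex's edge incidences being in bijection with the ports of its label. An assignment orients every edge; a vertex is satisfied if the set of its ports whose edges point into it belongs to its constraint. A simulation using gadgets from $S$ is a network of gadgets from $S$ that may additionally have dangling edges, each incident to only one vertex (equivalently, an extra outside-world vertex whose constraint contains every subset). It is planar if the graph including the outside world has a planar embedding respecting the port cyclic orders; the simulated gadget's ports are then the dangling edges in their order around the simulation. The simulated gadget's constraint consists of each set $D$ of dangling edges such that some assignment satisfying every non-outside-world vertex makes exactly the dangling edges in $D$ point into the simulation. A simulation is parsimonious if for each set in the simulated gadget's constraint there is exactly one such satisfying assignment realizing it; $S$ parsimoniously simulates $G$ if some parsimonious simulation using gadgets from $S$ has simulated gadget $G$. Gadgets: the free terminal has one port $a$ and constraint $\{\emptyset,\{a\}\}$. The NOT gate has ports $a,c$ and constraint $\{\emptyset,\{a,c\}\}$. The $k$-way fanout gate has ports $a,c_1,\dots,c_k$ and constraint $\{\{a\},\{c_1,\dots,c_k\}\}$. A generalized fanout is a gadget with at least three ports whose constraint consists of exactly two sets, which are complements of each other in the port set. *)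

theory Defs
  imports Main
begin

text \<open>A gadget with n ports: the ports are 0,...,n-1 in their cyclic order
  (0 -> 1 -> ... -> n-1 -> 0, counterclockwise); the constraint is a set of
  subsets of the ports.\<close>
type_synonym gadget = "nat \<times> nat set set"

definition nports :: "gadget \<Rightarrow> nat" where "nports G = fst G"
definition constr :: "gadget \<Rightarrow> nat set set" where "constr G = snd G"

definition wf_gadget :: "gadget \<Rightarrow> bool" where
  "wf_gadget G \<longleftrightarrow> constr G \<subseteq> Pow {..<nports G}"

text \<open>Isomorphism of gadgets: a bijection of ports preserving the cyclic order
  (i.e. a rotation) and the constraint.\<close>
definition gadget_iso :: "gadget \<Rightarrow> gadget \<Rightarrow> bool" where
  "gadget_iso G G' \<longleftrightarrow> nports G = nports G' \<and>
     (\<exists>r. constr G' = (\<lambda>X. (\<lambda>i. (i + r) mod nports G) ` X) ` constr G)"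

definition free_terminal :: gadget where "free_terminal = (1, {{}, {0}})"
definition not_gate :: gadget where "not_gate = (2, {{}, {0, 1}})"
text \<open>k-way fanout: port 0 is a, ports 1..k are c_1..c_k.\<close>
definition fanout :: "nat \<Rightarrow> gadget" where "fanout k = (k + 1, {{0}, {1..k}})"

definition generalized_fanout :: "gadget \<Rightarrow> bool" where
  "generalized_fanout G \<longleftrightarrow> nports G \<ge> 3 \<and>
     (\<exists>X. X \<subseteq> {..<nports G} \<and> constr G = {X, {..<nports G} - X})"

text \<open>Darts (edge ends): (Some v, i) is port i of vertex v; (None, j) is the j-th
  port of the outside world, j < m, i.e. the outer end of the j-th dangling edge.
  The fixed-point-free involution alpha pairs the two ends of each edge.\<close>
type_synonym dart = "nat option \<times> nat"

definition darts :: "nat set \<Rightarrow> (nat \<Rightarrow> gadget) \<Rightarrow> nat \<Rightarrow> dart set" where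
  "darts V lab m = {(Some v, i) | v i. v \<in> V \<and> i < nports (lab v)} \<union> {(None, j) | j. j < m}"

definition is_simulation ::
  "gadget set \<Rightarrow> nat set \<Rightarrow> (nat \<Rightarrow> gadget) \<Rightarrow> nat \<Rightarrow> (dart \<Rightarrow> dart) \<Rightarrow> bool" where
  "is_simulation S V lab m \<alpha> \<longleftrightarrow> finite V \<and> (\<forall>v\<in>V. lab v \<in> S) \<and>
     (\<forall>d\<in>darts V lab m. \<alpha> d \<in> darts V lab m \<and> \<alpha> (\<alpha> d) = d \<and> \<alpha> d \<noteq> d) \<and>
     (\<forall>j<m. fst (\<alpha> (None, j)) \<noteq> None)"

text \<open>The
  outside world (a vertex "at infinity") rotates in the opposite sense, so that
  the dangling edges 0,1,...,m-1 appear in this (counterclockwise) order around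
  the simulation.\<close>
definition rot :: "(nat \<Rightarrow> gadget) \<Rightarrow> nat \<Rightarrow> dart \<Rightarrow> dart" where
  "rot lab m d = (case d of (Some v, i) \<Rightarrow> (Some v, Suc i mod nports (lab v))
                          | (None, j) \<Rightarrow> (None, (j + m - 1) mod m))"

definition orbit_of :: "('a \<Rightarrow> 'a) \<Rightarrow> 'a \<Rightarrow> 'a set" where
  "orbit_of f x = range (\<lambda>k. (f ^^ k) x)"

definition num_orbits :: "('a \<Rightarrow> 'a) \<Rightarrow> 'a set \<Rightarrow> nat" where
  "num_orbits f D = card (orbit_of f ` D)"

definition num_components :: "('a \<Rightarrow> 'a) \<Rightarrow> ('a \<Rightarrow> 'a) \<Rightarrow> 'a set \<Rightarrow> nat" where
  "num_components f g D = card ((\<lambda>d. {e. (d, e) \<in> ({(x, f x) | x. x \<in> D} \<union> {(x, g x) | x. x \<in> D}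
        \<union> {(f x, x) | x. x \<in> D} \<union> {(g x, x) | x. x \<in> D})\<^sup>*}) ` D)"

text \<open>Planarity of the graph including the outside world with respect to the
  rotation system: Euler's formula V - E + F = 2 C for the combinatorial map
  (vertices = rot-orbits, edges = alpha-orbits, faces = (rot o alpha)-orbits),
  i.e. every component has genus 0.\<close>
definition planar_sim :: "nat set \<Rightarrow> (nat \<Rightarrow> gadget) \<Rightarrow> nat \<Rightarrow> (dart \<Rightarrow> dart) \<Rightarrow> bool" where
  "planar_sim V lab m \<alpha> \<longleftrightarrow>
     (let D = darts V lab m; \<sigma> = rot lab m in
       num_orbits \<sigma> D + num_orbits (\<sigma> \<circ> \<alpha>) D = num_orbits \<alpha> D + 2 * num_components \<sigma> \<alpha> D)"

text \<open>Assignments: H is the set of head darts (the edge points into the end H).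
  Every non-outside-world vertex must be satisfied.\<close>
definition sat_assignment :: "nat set \<Rightarrow> (nat \<Rightarrow> gadget) \<Rightarrow> nat \<Rightarrow> (dart \<Rightarrow> dart) \<Rightarrow> dart set \<Rightarrow> bool" where
  "sat_assignment V lab m \<alpha> H \<longleftrightarrow> H \<subseteq> darts V lab m \<and>
     (\<forall>d\<in>darts V lab m. d \<in> H \<longleftrightarrow> \<alpha> d \<notin> H) \<and>
     (\<forall>v\<in>V. {i. i < nports (lab v) \<and> (Some v, i) \<in> H} \<in> constr (lab v))"

text \<open>The dangling edges pointing into the simulation under H.\<close>
definition inward :: "nat \<Rightarrow> dart set \<Rightarrow> nat set" where
  "inward m H = {j. j < m \<and> (None, j) \<notin> H}"

definition simulated_gadget :: "nat set \<Rightarrow> (nat \<Rightarrow> gadget) \<Rightarrow> nat \<Rightarrow> (dart \<Rightarrow> dart) \<Rightarrow> gadget" where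
  "simulated_gadget V lab m \<alpha> = (m, {inward m H | H. sat_assignment V lab m \<alpha> H})"

definition parsimonious :: "nat set \<Rightarrow> (nat \<Rightarrow> gadget) \<Rightarrow> nat \<Rightarrow> (dart \<Rightarrow> dart) \<Rightarrow> bool" where
  "parsimonious V lab m \<alpha> \<longleftrightarrow>
     (\<forall>X \<in> constr (simulated_gadget V lab m \<alpha>).
        \<exists>!H. sat_assignment V lab m \<alpha> H \<and> inward m H = X)"

definition planar_pars_simulates :: "gadget set \<Rightarrow> gadget \<Rightarrow> bool" where
  "planar_pars_simulates S G \<longleftrightarrow> (\<exists>V lab m \<alpha>.
     is_simulation S V lab m \<alpha> \<and> planar_sim V lab m \<alpha> \<and> parsimonious V lab m \<alpha> \<and>
     gadget_iso (simulated_gadget V lab m \<alpha>) G)"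

end

theory Submission
  imports Defs
begin

text \<open>Join 2N copies of F = (n, {X, {..<n} - X}) in a cycle, port r of each copy to port l
  of the next, where l and r lie on the same side of X and the port d right after l comes
  before r in the cyclic order. An edge points into exactly one of its ends, so consecutive
  copies are in complementary states, and the even-length ring has exactly two satisfying
  assignments, fixed by the state of copy 0. The j-th dangling edge leaves port d of copy 2j
  or of copy 2j + 1 (the latter iff j \<in> Y), so the two assignments realise Y and its
  complement; every other port is capped by a free terminal, which imposes nothing. For
  planarity, the map including the outside world is connected and has 2N + T + 1 vertices
  (T terminals), 2N + T + N edges and N + 1 faces: the inside of the ring and one face between
  any two consecutive dangling edges. Choosing (N, Y) = (2, {}), (k + 1, {0}), or the data of
  F' gives the three claims.\<close>

section \<open>Counting orbits\<close>

lemma funpow_closed: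
  assumes "\<forall>x\<in>D. f x \<in> D" "x \<in> D" shows "(f ^^ k) x \<in> D"
  using assms by (induction k) auto

lemma inj_on_funpow:
  assumes "\<forall>x\<in>D. f x \<in> D" "inj_on f D" shows "inj_on (f ^^ k) D"
proof (induction k)
  case 0 then show ?case by simp
next
  case (Suc k)
  have "inj_on (f \<circ> (f ^^ k)) D"
    using Suc assms by (intro comp_inj_on) (auto intro: inj_on_subset funpow_closed)
  then show ?case by (simp add: funpow_Suc_right[symmetric] funpow_swap1 comp_def)
qed

lemma funpow_periodic:
  assumes fin: "finite D" and maps: "\<forall>x\<in>D. f x \<in> D" and inj: "inj_on f D" and x: "x \<in> D"
  shows "\<exists>p>0. (f ^^ p) x = x"
proof -
  have "\<not> inj_on (\<lambda>k. (f ^^ k) x) {..card D}"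
  proof
    assume i: "inj_on (\<lambda>k. (f ^^ k) x) {..card D}"
    have "(\<lambda>k. (f ^^ k) x) ` {..card D} \<subseteq> D" using funpow_closed[OF maps x]
      by auto
    then have "card ((\<lambda>k. (f ^^ k) x) ` {..card D}) \<le> card D" using fin
      by (simp add: card_mono)
    then show False using card_image[OF i] by simp
  qed
  then obtain i j where ij: "i \<le> card D" "j \<le> card D" "i \<noteq> j" "(f ^^ i) x = (f ^^ j) x"
    unfolding inj_on_def by auto
  have main: "(f ^^ (b - a)) x = x" if "a < b" "(f ^^ a) x = (f ^^ b) x" for a b
  proof -
    have "(f ^^ a) ((f ^^ (b - a)) x) = (f ^^ (a + (b - a))) x"
      by (simp add: funpow_add)
    also have "\<dots> = (f ^^ b) x" using that by simp
    also have "\<dots> = (f ^^ a) x" using that by simp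
    finally show ?thesis
      using inj_on_funpow[OF maps inj, of a] funpow_closed[OF maps x] x unfolding inj_on_def
        by blast
  qed
  show ?thesis
  proof (cases "i < j")
    case True then show ?thesis using main[of i j] ij by (intro exI[of _ "j - i"]) auto
  next
    case False then have "j < i" using ij by simp
    then show ?thesis using main[of j i] ij by (intro exI[of _ "i - j"]) auto
  qed
qed

lemma orbit_of_funpow_sub: "orbit_of f ((f ^^ k) x) \<subseteq> orbit_of f x"
proof
  fix y assume "y \<in> orbit_of f ((f ^^ k) x)"
  then obtain j where "y = (f ^^ j) ((f ^^ k) x)" unfolding orbit_of_def by auto
  then have "y = (f ^^ (j + k)) x" by (simp add: funpow_add)
  then show "y \<in> orbit_of f x" unfolding orbit_of_def by auto
qed

lemma orbit_of_funpow:
  assumes fin: "finite D" and maps: "\<forall>x\<in>D. f x \<in> D" and inj: "inj_on f D" and x: "x \<in> D"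
  shows "orbit_of f ((f ^^ k) x) = orbit_of f x"
proof
  show "orbit_of f ((f ^^ k) x) \<subseteq> orbit_of f x" by (rule orbit_of_funpow_sub)
  obtain p where p: "p > 0" "(f ^^ p) x = x" using funpow_periodic[OF assms] by blast
  have pk: "(f ^^ (p * k)) x = x"
    by (induction k) (auto simp: funpow_add comp_def p(2) mult.commute[of p] add.commute)
  have kk: "p * k - k + k = p * k" using p(1) by (simp add: le_add_diff_inverse2)
  have "(f ^^ (p * k - k)) ((f ^^ k) x) = (f ^^ (p * k - k + k)) x" by (simp add: funpow_add)
  then have "(f ^^ (p * k - k)) ((f ^^ k) x) = x" using pk kk by simp
  then have "x \<in> orbit_of f ((f ^^ k) x)" unfolding orbit_of_def by (metis rangeI)
  then obtain a where a: "x = (f ^^ a) ((f ^^ k) x)" unfolding orbit_of_def by auto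
  show "orbit_of f x \<subseteq> orbit_of f ((f ^^ k) x)"
    using orbit_of_funpow_sub[of f a "(f ^^ k) x"] a by simp
qed

lemma funpow_reaches_by_rank:
  assumes maps: "\<forall>x\<in>D. f x \<in> D"
    and step: "\<forall>x\<in>D. x \<notin> R \<longrightarrow> f x \<in> R \<or> h (f x) < (h x :: nat)"
  shows "\<forall>x\<in>D. \<exists>k. (f ^^ k) x \<in> R"
proof
  fix x assume "x \<in> D"
  then show "\<exists>k. (f ^^ k) x \<in> R"
  proof (induction "h x" arbitrary: x rule: less_induct)
    case less
    show ?case
    proof (cases "x \<in> R")
      case True then show ?thesis by (intro exI[of _ 0]) simp
    next
      case False
      then have "f x \<in> R \<or> h (f x) < h x" using step less by auto
      then show ?thesis
      proof
        assume "f x \<in> R" then show ?thesis by (intro exI[of _ 1]) simp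
      next
        assume "h (f x) < h x"
        then obtain k where "(f ^^ k) (f x) \<in> R" using less maps by blast
        then show ?thesis by (metis funpow_Suc_right comp_apply)
      qed
    qed
  qed
qed

lemma num_orbits_eq_card_reps:
  assumes fin: "finite D" and maps: "\<forall>x\<in>D. f x \<in> D" and inj: "inj_on f D"
    and RD: "R \<subseteq> D" and finv: "\<forall>x\<in>D. g (f x) = g x" and injg: "inj_on g R"
    and reach: "\<forall>x\<in>D. \<exists>k. (f ^^ k) x \<in> R"
  shows "num_orbits f D = card R"
proof -
  have ginv: "g ((f ^^ k) x) = g x" if "x \<in> D" for x k
    using that by (induction k) (auto simp: finv funpow_closed[OF maps])
  have "orbit_of f ` D = orbit_of f ` R"
  proof
    show "orbit_of f ` R \<subseteq> orbit_of f ` D" using RD by auto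
    show "orbit_of f ` D \<subseteq> orbit_of f ` R"
    proof
      fix Ob assume "Ob \<in> orbit_of f ` D"
      then obtain x where x: "x \<in> D" "Ob = orbit_of f x" by auto
      obtain k where "(f ^^ k) x \<in> R" using reach x by auto
      then show "Ob \<in> orbit_of f ` R" using orbit_of_funpow[OF fin maps inj x(1), of k] x
        by (metis image_eqI)
    qed
  qed
  moreover have "inj_on (orbit_of f) R"
  proof (rule inj_onI)
    fix a b assume ab: "a \<in> R" "b \<in> R" "orbit_of f a = orbit_of f b"
    have "b \<in> orbit_of f b" unfolding orbit_of_def by (metis funpow_0 rangeI)
    then obtain k where "b = (f ^^ k) a" using ab unfolding orbit_of_def by auto
    then have "g b = g a" using ginv ab RD by auto
    then show "a = b" using injg ab unfolding inj_on_def by auto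
  qed
  ultimately show ?thesis unfolding num_orbits_def by (simp add: card_image)
qed

lemma card_rtrancl_classes_eq_1:
  assumes sym: "sym (r\<^sup>*)" and x0: "x0 \<in> D" and conn: "\<forall>x\<in>D. (x, x0) \<in> r\<^sup>*"
  shows "card ((\<lambda>d. {e. (d, e) \<in> r\<^sup>*}) ` D) = 1"
proof -
  have "{e. (d, e) \<in> r\<^sup>*} = {e. (x0, e) \<in> r\<^sup>*}" if "d \<in> D" for d
  proof -
    have "(d, x0) \<in> r\<^sup>*" "(x0, d) \<in> r\<^sup>*"
      using conn sym that unfolding sym_def by blast+
    then show ?thesis by (auto intro: rtrancl_trans)
  qed
  then have "(\<lambda>d. {e. (d, e) \<in> r\<^sup>*}) ` D = {{e. (x0, e) \<in> r\<^sup>*}}"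
    using x0 by blast
  then show ?thesis by simp
qed

lemma num_components_eq_1:
  assumes x0: "x0 \<in> D"
    and conn: "\<forall>x\<in>D. (x, x0) \<in> ({(x, f x) | x. x \<in> D} \<union> {(x, g x) | x. x \<in> D}
        \<union> {(f x, x) | x. x \<in> D} \<union> {(g x, x) | x. x \<in> D})\<^sup>*"
  shows "num_components f g D = 1"
proof -
  have "sym ({(x, f x) | x. x \<in> D} \<union> {(x, g x) | x. x \<in> D}
        \<union> {(f x, x) | x. x \<in> D} \<union> {(g x, x) | x. x \<in> D})"
    unfolding sym_def by blast
  then show ?thesis
    unfolding num_components_def by (rule card_rtrancl_classes_eq_1[OF sym_rtrancl x0 conn])
qed

lemma card_Un3_disjoint:
  assumes "finite A" "finite B" "finite C" "A \<inter> B = {}" "A \<inter> C = {}" "B \<inter> C = {}"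
  shows "card (A \<union> B \<union> C) = card A + card B + card C"
  using assms by (simp add: card_Un_disjoint Int_Un_distrib2)

lemma gadget_iso_refl:
  assumes "wf_gadget G" shows "gadget_iso G G"
proof -
  have "(\<lambda>i. (i + 0) mod nports G) ` Z = Z" if "Z \<in> constr G" for Z
    using assms that unfolding wf_gadget_def by (force simp: subset_iff)
  then have "constr G = (\<lambda>Z. (\<lambda>i. (i + 0) mod nports G) ` Z) ` constr G" by simp
  then show ?thesis unfolding gadget_iso_def by blast
qed

section \<open>A ring of generalized fanouts\<close>

text \<open>Copy i of F is the vertex 2 i and the free terminal capping its port p is the odd
  vertex terminal i p. The j-th dangling edge leaves port d of copy edge_copy j.\<close>

locale fanout_ring =
  fixes n :: nat and X :: "nat set" and l :: nat and dl :: nat and N :: nat and Y :: "nat set"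
  assumes n_ge_3: "3 \<le> n" and Xsub: "X \<subseteq> {..<n}"
    and l_lt: "l < n" and dl_ge_2: "2 \<le> dl" and dl_lt: "dl < n"
    and l_dl_same_side: "l \<in> X \<longleftrightarrow> (l + dl) mod n \<in> X"
    and N_ge_1: "1 \<le> N" and Ysub: "Y \<subseteq> {..<N}"
begin

definition "r = (l + dl) mod n"
definition "d = Suc l mod n"
definition "M = 2 * N"
definition "offset p = (p + n - l) mod n"
definition "dangling i \<longleftrightarrow> (odd i \<longleftrightarrow> i div 2 \<in> Y)"
definition "dangling_below i = i div 2 + (if odd i \<and> i div 2 \<notin> Y then 1 else 0)"
definition "edge_copy j = 2 * j + (if j \<in> Y then 1 else 0)"
definition "used_port i p \<longleftrightarrow> p = l \<or> p = r \<or> (p = d \<and> dangling i)"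
definition "terminal i p = 2 * (n * i + p) + 1"
definition "verts = {2 * i | i. i < M} \<union> {terminal i p | i p. i < M \<and> p < n \<and> \<not> used_port i p}"
definition "fan_gadget = (n, {X, {..<n} - X})"
definition "lab v = (if even v then fan_gadget else free_terminal)"
definition alpha :: "dart \<Rightarrow> dart" where
 "alpha x = (case x of (Some v, p) \<Rightarrow> if even v then
     (if p = r then (Some (2 * (Suc (v div 2) mod M)), l)
      else if p = l then (Some (2 * ((v div 2 + M - 1) mod M)), r)
      else if p = d \<and> dangling (v div 2) then (None, v div 2 div 2)
      else (Some (terminal (v div 2) p), 0))
    else (Some (2 * (v div 2 div n)), v div 2 mod n)
   | (None, j) \<Rightarrow> (Some (2 * edge_copy j), d))"

abbreviation "D \<equiv> darts verts lab N"
abbreviation "sig \<equiv> rot lab N"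
abbreviation "phi \<equiv> sig \<circ> alpha"

lemma n_pos: "0 < n" using n_ge_3 by simp
lemma r_lt: "r < n" unfolding r_def using n_pos by simp
lemma d_lt: "d < n" unfolding d_def using n_pos by simp
lemma offset_lt: "offset p < n" unfolding offset_def using n_pos by simp
lemma offset_l: "offset l = 0" unfolding offset_def by simp
lemma offset_d: "offset d = 1" unfolding offset_def d_def using l_lt n_ge_3
  by (cases "Suc l = n") (auto simp: mod_if)
lemma offset_r: "offset r = dl" unfolding offset_def r_def using l_lt dl_lt
  by (cases "l + dl < n") (auto simp: mod_if)
lemma offset_inj: "p < n \<Longrightarrow> q < n \<Longrightarrow> offset p = offset q \<Longrightarrow> p = q"
  unfolding offset_def using l_lt by (auto simp: mod_if split: if_splits)
lemma offset_Suc: "p < n \<Longrightarrow> offset (Suc p mod n) = Suc (offset p) mod n"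
  unfolding offset_def using l_lt by (auto simp: mod_if)
lemma l_ne_r: "l \<noteq> r" using offset_l offset_r dl_ge_2 by auto
lemma d_ne_l: "d \<noteq> l" using offset_l offset_d by auto
lemma d_ne_r: "d \<noteq> r" using offset_d offset_r dl_ge_2 by auto
lemma l_r_same_side: "l \<in> X \<longleftrightarrow> r \<in> X" using l_dl_same_side
  unfolding r_def .

lemma terminal_odd: "odd (terminal i p)" unfolding terminal_def by simp
lemma terminal_div: "p < n \<Longrightarrow> terminal i p div 2 div n = i" unfolding terminal_def
  by simp
lemma terminal_mod: "p < n \<Longrightarrow> terminal i p div 2 mod n = p" unfolding terminal_def
  by simp
lemma terminal_inj: "p < n \<Longrightarrow> q < n \<Longrightarrow> terminal i p = terminal j q \<Longrightarrow> i = j \<and> p = q"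
  using terminal_div terminal_mod by metis

lemma nports_fan_gadget[simp]: "nports fan_gadget = n" unfolding fan_gadget_def nports_def by simp
lemma constr_fan_gadget: "constr fan_gadget = {X, {..<n} - X}" unfolding fan_gadget_def constr_def
  by simp
lemma nports_free_terminal[simp]: "nports free_terminal = 1" unfolding free_terminal_def nports_def
  by simp
lemma constr_free_terminal: "constr free_terminal = {{}, {0}}"
  unfolding free_terminal_def constr_def by simp
lemma lab_copy[simp]: "lab (2 * i) = fan_gadget" unfolding lab_def by simp
lemma lab_terminal[simp]: "lab (terminal i p) = free_terminal" unfolding lab_def using terminal_odd
  by simp

lemma M_even: "even M" unfolding M_def by simp
lemma M_pos: "0 < M" unfolding M_def using N_ge_1 by simp

lemma copy_dart: "i < M \<Longrightarrow> p < n \<Longrightarrow> (Some (2 * i), p) \<in> D"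
  unfolding darts_def verts_def by auto
lemma terminal_dart: "i < M \<Longrightarrow> p < n \<Longrightarrow> \<not> used_port i p \<Longrightarrow> (Some (terminal i p), 0) \<in> D"
  unfolding darts_def verts_def by auto
lemma outer_dart: "j < N \<Longrightarrow> (None, j) \<in> D"
  unfolding darts_def by auto

lemma dart_cases:
  assumes "x \<in> D"
  obtains (copy) i p where "x = (Some (2 * i), p)" "i < M" "p < n"
    | (terminal) i p where "x = (Some (terminal i p), 0)" "i < M" "p < n" "\<not> used_port i p"
    | (outer) j where "x = (None, j)" "j < N"
  using assms unfolding darts_def verts_def by auto

lemma finite_verts: "finite verts"
proof -
  have "{terminal i p | i p. i < M \<and> p < n \<and> \<not> used_port i p} \<subseteq> (\<lambda>(i, p). terminal i p) ` ({..<M} \<times> {..<n})"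
    by auto
  then have "finite {terminal i p | i p. i < M \<and> p < n \<and> \<not> used_port i p}"
    by (rule finite_subset) auto
  moreover have "{2 * i | i. i < M} = (\<lambda>i. 2 * i) ` {..<M}" by auto
  ultimately show ?thesis unfolding verts_def by simp
qed

lemma finite_D: "finite D"
proof -
  have "D \<subseteq> ((\<lambda>(i, p). (Some (2 * i), p)) ` ({..<M} \<times> {..<n})) \<union>
      ((\<lambda>(i, p). (Some (terminal i p), 0)) ` ({..<M} \<times> {..<n})) \<union> ((\<lambda>j. (None, j)) ` {..<N})"
  proof
    fix x assume "x \<in> D"
    then show "x \<in> ((\<lambda>(i, p). (Some (2 * i), p)) ` ({..<M} \<times> {..<n})) \<union>
      ((\<lambda>(i, p). (Some (terminal i p), 0)) ` ({..<M} \<times> {..<n})) \<union> ((\<lambda>j. (None, j)) ` {..<N})"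
      by (cases rule: dart_cases) auto
  qed
  then show ?thesis by (rule finite_subset) auto
qed

lemma dangling_edge_copy: "dangling (edge_copy j)" unfolding dangling_def edge_copy_def by auto
lemma edge_copy_div: "edge_copy j div 2 = j" unfolding edge_copy_def by auto
lemma edge_copy_lt: "j < N \<Longrightarrow> edge_copy j < M" unfolding edge_copy_def M_def by auto
lemma edge_copy_odd: "odd (edge_copy j) \<longleftrightarrow> j \<in> Y" unfolding edge_copy_def
  by auto
lemma edge_copy_dangling: "dangling i \<Longrightarrow> edge_copy (i div 2) = i"
  unfolding edge_copy_def dangling_def by auto
lemma div2_lt: "i < M \<Longrightarrow> i div 2 < N" unfolding M_def by auto

lemma modM_suc: "i < M \<Longrightarrow> ((Suc i mod M) + M - 1) mod M = i"
  using M_pos by (cases "Suc i = M") (auto simp: mod_if)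
lemma modM_pred: "i < M \<Longrightarrow> Suc ((i + M - 1) mod M) mod M = i"
  using M_pos by (cases "i = 0") (auto simp: mod_if)
lemma modM_lt: "(k::nat) mod M < M" using M_pos by simp

lemma alpha_copy_r: "alpha (Some (2 * i), r) = (Some (2 * (Suc i mod M)), l)"
  unfolding alpha_def by simp
lemma alpha_copy_l: "alpha (Some (2 * i), l) = (Some (2 * ((i + M - 1) mod M)), r)"
  unfolding alpha_def using l_ne_r by simp
lemma alpha_copy_d: "dangling i \<Longrightarrow> alpha (Some (2 * i), d) = (None, i div 2)"
  unfolding alpha_def using d_ne_l d_ne_r by simp
lemma alpha_copy_unused: "\<not> used_port i p \<Longrightarrow> alpha (Some (2 * i), p) = (Some (terminal i p), 0)"
  unfolding alpha_def used_port_def by auto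
lemma alpha_terminal: "p < n \<Longrightarrow> alpha (Some (terminal i p), 0) = (Some (2 * i), p)"
  unfolding alpha_def using terminal_odd terminal_div terminal_mod by simp
lemma alpha_outer: "alpha (None, j) = (Some (2 * edge_copy j), d)"
  unfolding alpha_def by simp

lemma used_port_r: "used_port i r"
  unfolding used_port_def by auto

lemma alpha_involution: assumes x: "x \<in> D" shows "alpha x \<in> D \<and> alpha (alpha x) = x \<and> alpha x \<noteq> x"
  using x proof (cases rule: dart_cases)
  case (copy i p)
  show ?thesis
  proof (cases "p = r")
    case True then show ?thesis
      using copy alpha_copy_r alpha_copy_l modM_suc copy_dart modM_lt l_lt l_ne_r by auto
  next
    case F1: False show ?thesis
    proof (cases "p = l")
      case True then show ?thesis
        using copy alpha_copy_r alpha_copy_l modM_pred copy_dart modM_lt r_lt l_ne_r by auto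
    next
      case F2: False show ?thesis
      proof (cases "p = d \<and> dangling i")
        case True then show ?thesis
          using copy alpha_copy_d alpha_outer edge_copy_dangling outer_dart div2_lt by auto
      next
        case False
        then have u: "\<not> used_port i p" using F1 F2 unfolding used_port_def by auto
        moreover have "terminal i p \<noteq> 2 * i" using terminal_odd[of i p] by auto
        ultimately show ?thesis using copy alpha_copy_unused alpha_terminal terminal_dart by auto
      qed
    qed
  qed
next
  case (terminal i p)
  moreover have "terminal i p \<noteq> 2 * i" using terminal_odd[of i p] by auto
  ultimately show ?thesis using alpha_copy_unused alpha_terminal copy_dart by auto
next
  case (outer j) then show ?thesis
    using alpha_outer alpha_copy_d dangling_edge_copy edge_copy_div edge_copy_lt copy_dart d_lt
      by auto
qed

lemma is_simulation_ring: "is_simulation {fan_gadget, free_terminal} verts lab N alpha"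
  unfolding is_simulation_def
proof (intro conjI)
  show "finite verts" by (rule finite_verts)
  show "\<forall>v\<in>verts. lab v \<in> {fan_gadget, free_terminal}" unfolding lab_def by auto
  show "\<forall>d\<in>D. alpha d \<in> D \<and> alpha (alpha d) = d \<and> alpha d \<noteq> d"
    using alpha_involution by blast
  show "\<forall>j<N. fst (alpha (None, j)) \<noteq> None" using alpha_outer by simp
qed

subsection \<open>Faces\<close>

lemma sig_copy: "sig (Some (2 * i), p) = (Some (2 * i), Suc p mod n)"
  unfolding rot_def by simp
lemma sig_terminal: "sig (Some (terminal i p), 0) = (Some (terminal i p), 0)"
  unfolding rot_def by simp
lemma sig_outer: "sig (None, j) = (None, (j + N - 1) mod N)"
  unfolding rot_def by simp

lemma Suc_l_mod: "Suc l mod n = d" unfolding d_def ..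

lemma phi_r: "phi (Some (2 * i), r) = (Some (2 * (Suc i mod M)), d)"
  using alpha_copy_r sig_copy Suc_l_mod by simp
lemma phi_l: "phi (Some (2 * i), l) = (Some (2 * ((i + M - 1) mod M)), Suc r mod n)"
  using alpha_copy_l sig_copy by simp
lemma phi_d: "dangling i \<Longrightarrow> phi (Some (2 * i), d) = (None, (i div 2 + N - 1) mod N)"
  using alpha_copy_d sig_outer by simp
lemma phi_unused: "\<not> used_port i p \<Longrightarrow> phi (Some (2 * i), p) = (Some (terminal i p), 0)"
  using alpha_copy_unused sig_terminal by simp
lemma phi_terminal: "p < n \<Longrightarrow> phi (Some (terminal i p), 0) = (Some (2 * i), Suc p mod n)"
  using alpha_terminal sig_copy by simp
lemma phi_outer: "phi (None, j) = (Some (2 * edge_copy j), Suc d mod n)"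
  using alpha_outer sig_copy by simp

lemma sig_maps: "x \<in> D \<Longrightarrow> sig x \<in> D"
  by (erule dart_cases) (auto simp: sig_copy sig_terminal sig_outer intro: copy_dart terminal_dart outer_dart n_pos N_ge_1)

lemma sig_inj: "inj_on sig D"
proof (rule inj_onI)
  fix x y assume x: "x \<in> D" and y: "y \<in> D" and e: "sig x = sig y"
  have fe: "fst (sig z) = fst z" for z unfolding rot_def by (auto split: prod.splits option.splits)
  have "fst x = fst y" using fe[of x] fe[of y] e by simp
  show "x = y"
  proof (cases "fst x")
    case None
    then obtain j k where "x = (None, j)" "j < N" "y = (None, k)" "k < N"
      using x y \<open>fst x = fst y\<close> by (auto elim!: dart_cases)
    then show ?thesis using e sig_outer by (auto simp: mod_if split: if_splits)
  next
    case (Some v)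
    have "snd x < nports (lab v)" "snd y < nports (lab v)"
      using x y Some \<open>fst x = fst y\<close> unfolding darts_def by auto
    moreover have "Suc (snd x) mod nports (lab v) = Suc (snd y) mod nports (lab v)"
      using e Some \<open>fst x = fst y\<close> unfolding rot_def by (cases x, cases y) auto
    ultimately have "snd x = snd y" by (auto simp: mod_if split: if_splits)
    then show ?thesis using \<open>fst x = fst y\<close> by (simp add: prod_eq_iff)
  qed
qed

lemma alpha_maps: "x \<in> D \<Longrightarrow> alpha x \<in> D" using alpha_involution by blast
lemma alpha_inj: "inj_on alpha D"
  by (rule inj_onI) (metis alpha_involution)
lemma phi_maps: "x \<in> D \<Longrightarrow> phi x \<in> D" using alpha_maps sig_maps by simp
lemma phi_inj: "inj_on phi D"
  using alpha_inj sig_inj alpha_maps by (intro comp_inj_on) (auto intro: inj_on_subset)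

lemma dangling_below_0: "dangling_below 0 = 0" unfolding dangling_below_def by simp
lemma dangling_below_Suc: "dangling_below (Suc i) = dangling_below i + (if dangling i then 1 else 0)"
proof (cases "even i")
  case True then obtain k where "i = 2 * k" by (auto elim: evenE)
  then show ?thesis unfolding dangling_below_def dangling_def by simp
next
  case False then obtain k where "i = 2 * k + 1" by (auto elim: oddE)
  then show ?thesis unfolding dangling_below_def dangling_def by simp
qed
lemma dangling_below_M: "dangling_below M = N" unfolding dangling_below_def M_def by simp
lemma dangling_below_dangling: "dangling i \<Longrightarrow> dangling_below i = i div 2"
  unfolding dangling_below_def dangling_def by auto
lemma dangling_below_edge_copy: "dangling_below (edge_copy j) = j"
  using dangling_below_dangling[OF dangling_edge_copy] edge_copy_div by simp

lemma used_port_iff_offset: "p < n \<Longrightarrow> used_port i p \<longleftrightarrow> offset p = 0 \<or> offset p = dl \<or> (offset p = 1 \<and> dangling i)"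
  unfolding used_port_def
    using offset_inj[of p l] offset_inj[of p r] offset_inj[of p d] offset_l offset_r offset_d l_lt r_lt d_lt
  by auto

text \<open>A face walk either runs along the inner side of the ring, through the darts of inner
  offset, or along the outer side between two consecutive dangling edges. face labels the face
  of a dart, N for the inner one and j for the one through (None, j), and is invariant under
  phi; rank decreases along phi until the walk reaches (Some 0, l) or some (None, j).\<close>

definition "inner_offset (q::nat) \<longleftrightarrow> q = 0 \<or> dl < q"
definition "dangling_upto i (q::nat) = dangling_below i + (if dangling i \<and> 2 \<le> q then 1 else 0)"
definition "face_at i (q::nat) = (if inner_offset q then N else (dangling_upto i q + N - 1) mod N)"
definition "exit_offset i (q::nat) = (if dangling i \<and> q \<le> 1 then 1 else dl)"
definition "block = 2 * n"
definition "rank_at i (q::nat) = (if inner_offset q then i * block + 2 * ((n - q) mod n)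
   else (M - i) * block + 2 * (exit_offset i q - q) + (if dangling_upto i q = N then M * block else 0))"
definition face :: "dart \<Rightarrow> nat" where
  "face x = (case x of (None, j) \<Rightarrow> j | (Some v, p) \<Rightarrow>
     if even v then face_at (v div 2) (offset p) else face_at (v div 2 div n) (offset (v div 2 mod n)))"
definition rank :: "dart \<Rightarrow> nat" where
  "rank x = (case x of (None, j) \<Rightarrow> 0 | (Some v, p) \<Rightarrow>
     if even v then rank_at (v div 2) (offset p) else rank_at (v div 2 div n) (offset (v div 2 mod n)) - 1)"

lemma face_copy: "face (Some (2 * i), p) = face_at i (offset p)" unfolding face_def by simp
lemma face_terminal: "p < n \<Longrightarrow> face (Some (terminal i p), 0) = face_at i (offset p)"
  unfolding face_def using terminal_odd terminal_div terminal_mod by simp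
lemma face_outer: "face (None, j) = j" unfolding face_def by simp
lemma rank_copy: "rank (Some (2 * i), p) = rank_at i (offset p)" unfolding rank_def by simp
lemma rank_terminal: "p < n \<Longrightarrow> rank (Some (terminal i p), 0) = rank_at i (offset p) - 1"
  unfolding rank_def using terminal_odd terminal_div terminal_mod by simp

lemma offset_Suc_r: "offset (Suc r mod n) = Suc dl mod n" using offset_Suc[OF r_lt] offset_r by simp
lemma offset_Suc_d: "offset (Suc d mod n) = 2" using offset_Suc[OF d_lt] offset_d n_ge_3 by simp
lemma not_inner_offset_dl: "\<not> inner_offset dl" unfolding inner_offset_def using dl_ge_2 by simp
lemma not_inner_offset_1: "\<not> inner_offset 1" unfolding inner_offset_def using dl_ge_2 by simp
lemma not_inner_offset_2: "\<not> inner_offset 2" unfolding inner_offset_def using dl_ge_2 by simp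
lemma inner_offset_Suc_dl: "inner_offset (Suc dl mod n)" unfolding inner_offset_def using dl_lt
  by (auto simp: mod_if)
lemma block_gt: "2 * ((n - q) mod n) < block" unfolding block_def using n_pos by simp

lemma pred_N_mod: "(N + N - 1) mod N = N - 1"
proof -
  have e: "N + N - 1 = (N - 1) + N" using N_ge_1 by simp
  have "(N - 1 + N) mod N = (N - 1) mod N" by (rule mod_add_self2)
  also have "\<dots> = N - 1" using N_ge_1 by (intro mod_less) linarith
  finally show ?thesis using e by simp
qed

lemma face_phi_r: "i < M \<Longrightarrow> face (phi (Some (2 * i), r)) = face (Some (2 * i), r)"
proof -
  assume i: "i < M"
  have a: "face (Some (2 * i), r) = (dangling_below (Suc i) + N - 1) mod N"
    unfolding face_copy offset_r face_at_def dangling_upto_def using not_inner_offset_dl dl_ge_2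
      by (simp add: dangling_below_Suc)
  have b: "face (phi (Some (2 * i), r)) = (dangling_below (Suc i mod M) + N - 1) mod N"
    unfolding phi_r face_copy offset_d face_at_def dangling_upto_def using not_inner_offset_1
      by simp
  show ?thesis
  proof (cases "Suc i < M")
    case True then show ?thesis using a b by simp
  next
    case False then have "Suc i = M" using i by simp
    then show ?thesis using a b dangling_below_M dangling_below_0 N_ge_1 pred_N_mod by simp
  qed
qed

lemma rank_phi_r: "i < M \<Longrightarrow> rank (phi (Some (2 * i), r)) < rank (Some (2 * i), r)"
proof -
  assume i: "i < M"
  let ?ex = "\<lambda>g. if g = N then M * block else 0"
  have a: "rank (Some (2 * i), r) = (M - i) * block + ?ex (dangling_below (Suc i))"
    unfolding rank_copy offset_r rank_at_def dangling_upto_def exit_offset_def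
      using not_inner_offset_dl dl_ge_2 by (simp add: dangling_below_Suc)
  have ep: "exit_offset j 1 \<le> dl" for j unfolding exit_offset_def using dl_ge_2 by simp
  have t: "2 * (exit_offset j 1 - 1) < block" for j
  proof -
    have "exit_offset j 1 - 1 \<le> exit_offset j 1" by simp
    then have "exit_offset j 1 - 1 < n" using ep[of j] dl_lt by linarith
    then show ?thesis unfolding block_def by simp
  qed
  have b: "rank (phi (Some (2 * i), r)) = (M - Suc i mod M) * block + 2 * (exit_offset (Suc i mod M) 1 - 1)
       + ?ex (dangling_below (Suc i mod M))"
    unfolding phi_r rank_copy offset_d rank_at_def dangling_upto_def using not_inner_offset_1
      by simp
  show ?thesis
  proof (cases "Suc i < M")
    case True
    then have "M - i = Suc (M - Suc i)" by simp
    then show ?thesis using a b True t[of "Suc i"] by simp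
  next
    case False then have "Suc i = M" using i by simp
    then have "M - i = 1" by simp
    then show ?thesis
      using a b dangling_below_M dangling_below_0 N_ge_1 t[of 0] \<open>Suc i = M\<close> by simp
  qed
qed

lemma face_phi_l: "i < M \<Longrightarrow> face (phi (Some (2 * i), l)) = face (Some (2 * i), l)"
  unfolding phi_l face_copy offset_l offset_Suc_r face_at_def using inner_offset_Suc_dl
    by (simp add: inner_offset_def)

lemma rank_phi_l: "0 < i \<Longrightarrow> i < M \<Longrightarrow> rank (phi (Some (2 * i), l)) < rank (Some (2 * i), l)"
proof -
  assume i: "0 < i" "i < M"
  have e: "i + M - 1 = (i - 1) + M" using i by simp
  have "(i - 1 + M) mod M = (i - 1) mod M" by (rule mod_add_self2)
  also have "\<dots> = i - 1" using i by (intro mod_less) linarith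
  finally have m: "(i + M - 1) mod M = i - 1" using e by simp
  have "rank (phi (Some (2 * i), l)) = (i - 1) * block + 2 * ((n - Suc dl mod n) mod n)"
    unfolding phi_l rank_copy offset_Suc_r m rank_at_def using inner_offset_Suc_dl by simp
  also have "\<dots> < (i - 1) * block + block" using block_gt by simp
  also have "\<dots> = i * block" using i by (cases i) auto
  also have "\<dots> = rank (Some (2 * i), l)" unfolding rank_copy offset_l rank_at_def
    by (simp add: inner_offset_def)
  finally show ?thesis .
qed

lemma face_phi_d: "dangling i \<Longrightarrow> face (phi (Some (2 * i), d)) = face (Some (2 * i), d)"
  unfolding phi_d face_outer face_copy offset_d face_at_def dangling_upto_def
    using not_inner_offset_1 dangling_below_dangling by simp

lemma unused_port_offset:
  assumes "p < n" "\<not> used_port i p"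
  shows "offset p \<noteq> 0" "offset p \<noteq> dl" "\<not> (offset p = 1 \<and> dangling i)"
  using used_port_iff_offset[OF assms(1), of i] assms(2) by auto

lemma face_phi_unused: "p < n \<Longrightarrow> \<not> used_port i p \<Longrightarrow> face (phi (Some (2 * i), p)) = face (Some (2 * i), p)"
  unfolding phi_unused face_terminal face_copy by (simp add: face_terminal)

lemma rank_at_pos: assumes "p < n" "\<not> used_port i p" shows "1 \<le> rank_at i (offset p)"
proof -
  note u = unused_port_offset[OF assms]
  have q: "offset p < n" by (rule offset_lt)
  show ?thesis
  proof (cases "inner_offset (offset p)")
    case True then have "dl < offset p" using u unfolding inner_offset_def by simp
    then show ?thesis unfolding rank_at_def using True q by simp
  next
    case False then have "offset p < dl" using u unfolding inner_offset_def by simp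
    moreover have "exit_offset i (offset p) = dl" unfolding exit_offset_def using u by auto
    ultimately show ?thesis unfolding rank_at_def using False by simp
  qed
qed

lemma rank_phi_unused: "p < n \<Longrightarrow> \<not> used_port i p \<Longrightarrow> rank (phi (Some (2 * i), p)) < rank (Some (2 * i), p)"
  unfolding phi_unused rank_copy by (simp add: rank_terminal) (use rank_at_pos in fastforce)

lemma face_phi_terminal: assumes "p < n" "\<not> used_port i p"
  shows "face (phi (Some (terminal i p), 0)) = face (Some (terminal i p), 0)"
proof -
  note u = unused_port_offset[OF assms]
  let ?q = "offset p"
  have q: "?q < n" by (rule offset_lt)
  have s: "offset (Suc p mod n) = Suc ?q mod n" by (rule offset_Suc[OF assms(1)])
  have "face_at i (Suc ?q mod n) = face_at i ?q"
  proof (cases "inner_offset ?q")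
    case True then have "dl < ?q" using u unfolding inner_offset_def by simp
    then have "inner_offset (Suc ?q mod n)" unfolding inner_offset_def using q
      by (auto simp: mod_if)
    then show ?thesis unfolding face_at_def using True by simp
  next
    case False then have lt: "?q < dl" "1 \<le> ?q" using u unfolding inner_offset_def by auto
    then have sq: "Suc ?q mod n = Suc ?q" using dl_lt by simp
    have "\<not> inner_offset (Suc ?q)" unfolding inner_offset_def using lt by simp
    moreover have "dangling_upto i (Suc ?q) = dangling_upto i ?q" unfolding dangling_upto_def
      using lt u by auto
    ultimately show ?thesis unfolding face_at_def sq using False by simp
  qed
  then show ?thesis unfolding phi_terminal[OF assms(1)] face_copy face_terminal[OF assms(1)] s
    by simp
qed

lemma rank_phi_terminal: assumes "p < n" "\<not> used_port i p"
  shows "rank (phi (Some (terminal i p), 0)) < rank (Some (terminal i p), 0)"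
proof -
  note u = unused_port_offset[OF assms]
  let ?q = "offset p"
  have q: "?q < n" by (rule offset_lt)
  have s: "offset (Suc p mod n) = Suc ?q mod n" by (rule offset_Suc[OF assms(1)])
  have "rank_at i (Suc ?q mod n) + 2 \<le> rank_at i ?q"
  proof (cases "inner_offset ?q")
    case True then have dq: "dl < ?q" using u unfolding inner_offset_def by simp
    show ?thesis
    proof (cases "Suc ?q < n")
      case True
      then have "inner_offset (Suc ?q mod n)" "Suc ?q mod n = Suc ?q" unfolding inner_offset_def
        using dq by auto
      then show ?thesis unfolding rank_at_def using \<open>inner_offset ?q\<close> True dq by simp
    next
      case False then have "Suc ?q = n" using q by simp
      then have "n - ?q = 1" by simp
      then show ?thesis unfolding rank_at_def
        using \<open>inner_offset ?q\<close> \<open>Suc ?q = n\<close> n_ge_3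
          by (simp add: inner_offset_def)
    qed
  next
    case False then have lt: "?q < dl" "1 \<le> ?q" using u unfolding inner_offset_def by auto
    then have sq: "Suc ?q mod n = Suc ?q" using dl_lt by simp
    have "\<not> inner_offset (Suc ?q)" unfolding inner_offset_def using lt by simp
    moreover have "dangling_upto i (Suc ?q) = dangling_upto i ?q" unfolding dangling_upto_def
      using lt u by auto
    moreover have "exit_offset i (Suc ?q) = dl" "exit_offset i ?q = dl" unfolding exit_offset_def
      using lt u by auto
    ultimately show ?thesis unfolding rank_at_def sq using False lt by simp
  qed
  then show ?thesis unfolding phi_terminal[OF assms(1)] rank_copy rank_terminal[OF assms(1)] s
    by simp
qed

lemma face_phi_outer: "j < N \<Longrightarrow> face (phi (None, j)) = face (None, j)"
  unfolding phi_outer face_copy face_outer offset_Suc_d face_at_def dangling_upto_def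
    using not_inner_offset_2 dangling_edge_copy dangling_below_edge_copy by simp

definition "face_reps = (\<lambda>j. (None, j)) ` {..<N} \<union> {(Some 0, l)}"

lemma face_phi: "x \<in> D \<Longrightarrow> face (phi x) = face x"
proof (erule dart_cases)
  fix i p assume x: "x = (Some (2 * i), p)" "i < M" "p < n"
  show "face (phi x) = face x"
  proof (cases "used_port i p")
    case True
    then consider "p = r" | "p = l" | "p = d \<and> dangling i" unfolding used_port_def by blast
    then show ?thesis using x face_phi_r face_phi_l face_phi_d by cases auto
  next
    case False then show ?thesis using x face_phi_unused by auto
  qed
next
  fix i p assume "x = (Some (terminal i p), 0)" "i < M" "p < n" "\<not> used_port i p"
  then show "face (phi x) = face x" using face_phi_terminal[of p i] by simp
next
  fix j assume "x = (None, j)" "j < N"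
  then show "face (phi x) = face x" using face_phi_outer[of j] by simp
qed

lemma rank_phi: "x \<in> D \<Longrightarrow> x \<notin> face_reps \<Longrightarrow> phi x \<in> face_reps \<or> rank (phi x) < rank x"
proof (erule dart_cases)
  fix i p assume x: "x = (Some (2 * i), p)" "i < M" "p < n" and nr: "x \<notin> face_reps"
  show ?thesis
  proof (cases "used_port i p")
    case True
    then consider "p = r" | "p = l" | "p = d \<and> dangling i" unfolding used_port_def by blast
    then show ?thesis
    proof cases
      case 1 then show ?thesis using x rank_phi_r by auto
    next
      case 2
      then have "i \<noteq> 0" using nr x unfolding face_reps_def by auto
      then show ?thesis using x rank_phi_l 2 by auto
    next
      case 3
      have "(i div 2 + N - 1) mod N < N" using N_ge_1 by simp
      then show ?thesis using x 3 phi_d unfolding face_reps_def by auto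
    qed
  next
    case False then show ?thesis using x rank_phi_unused by auto
  qed
next
  fix i p assume "x = (Some (terminal i p), 0)" "i < M" "p < n" "\<not> used_port i p"
  then show ?thesis using rank_phi_terminal by auto
next
  fix j assume "x = (None, j)" "j < N" "x \<notin> face_reps"
  then show ?thesis unfolding face_reps_def by auto
qed

lemma face_reps_subset: "face_reps \<subseteq> D" unfolding face_reps_def
  using outer_dart copy_dart[of 0 l] l_lt M_pos by auto

lemma inj_on_face: "inj_on face face_reps"
proof -
  have "face (Some 0, l) = N" using face_copy[of 0 l] offset_l
    unfolding face_at_def inner_offset_def by simp
  then show ?thesis unfolding face_reps_def inj_on_def by (auto simp: face_outer)
qed

lemma card_face_reps: "card face_reps = N + 1"
proof -
  let ?A = "(\<lambda>j. (None, j)) ` {..<N}"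
  have c: "card ?A = N" by (simp add: card_image inj_on_def)
  have e: "face_reps = insert (Some 0, l) ?A" unfolding face_reps_def by auto
  have "(Some 0, l) \<notin> ?A" by auto
  then show ?thesis unfolding e using c by (subst card_insert_disjoint) auto
qed

lemma reach_face_reps: "\<forall>x\<in>D. \<exists>k. (phi ^^ k) x \<in> face_reps"
  by (rule funpow_reaches_by_rank[where h = rank]) (use phi_maps rank_phi in auto)

lemma num_orbits_phi: "num_orbits phi D = N + 1"
  using num_orbits_eq_card_reps[OF finite_D _ phi_inj face_reps_subset _ inj_on_face reach_face_reps] phi_maps face_phi card_face_reps
  by auto

subsection \<open>Vertices and edges\<close>

definition "terminal_darts = (\<lambda>(i, p). (Some (terminal i p), 0::nat)) ` {(i, p). i < M \<and> p < n \<and> \<not> used_port i p}"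
definition "vertex_reps = (\<lambda>i. (Some (2 * i), 0::nat)) ` {..<M} \<union> terminal_darts \<union> {(None, 0)}"
definition "edge_reps = (\<lambda>i. (Some (2 * i), r)) ` {..<M} \<union> terminal_darts \<union> (\<lambda>j. (None, j)) ` {..<N}"

lemma finite_terminal_darts: "finite terminal_darts"
proof -
  have "{(i, p). i < M \<and> p < n \<and> \<not> used_port i p} \<subseteq> {..<M} \<times> {..<n}"
    by auto
  then have "finite {(i, p). i < M \<and> p < n \<and> \<not> used_port i p}"
    by (rule finite_subset) auto
  then show ?thesis unfolding terminal_darts_def by simp
qed

lemma terminal_dartsE: assumes "x \<in> terminal_darts"
  obtains i p where "x = (Some (terminal i p), 0)" "i < M" "p < n" "\<not> used_port i p"
  using assms unfolding terminal_darts_def by auto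

lemma terminal_darts_subset: "terminal_darts \<subseteq> D" unfolding terminal_darts_def
  using terminal_dart by auto

lemma terminal_neq_copy: "terminal i p \<noteq> 2 * j" using terminal_odd[of i p] by auto
lemma copy_neq_terminal: "2 * j \<noteq> terminal i p" using terminal_neq_copy by metis

lemma vertex_reps_subset: "vertex_reps \<subseteq> D" unfolding vertex_reps_def
  using copy_dart n_pos terminal_darts_subset outer_dart N_ge_1 by auto

lemma fst_sig: "fst (sig x) = fst x" unfolding rot_def by (auto split: prod.splits option.splits)

lemma inj_on_fst_vertex_reps: "inj_on fst vertex_reps"
proof -
  have "\<forall>x\<in>vertex_reps. snd x = 0" unfolding vertex_reps_def terminal_darts_def by auto
  then show ?thesis unfolding inj_on_def by (metis prod_eq_iff)
qed

lemma reach_vertex_reps: "\<forall>x\<in>D. \<exists>k. (sig ^^ k) x \<in> vertex_reps"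
proof -
  define h where "h x = (case x of (None, j) \<Rightarrow> j | (Some v, p) \<Rightarrow> if even v then n - p else 0)"
    for x :: dart
  have "sig x \<in> vertex_reps \<or> h (sig x) < h x" if x: "x \<in> D" "x \<notin> vertex_reps" for x
    using x(1)
  proof (cases rule: dart_cases)
    case (copy i p)
    then have "p \<noteq> 0" using x(2) unfolding vertex_reps_def by auto
    show ?thesis
    proof (cases "Suc p = n")
      case True then show ?thesis using copy unfolding vertex_reps_def by (simp add: sig_copy)
    next
      case False
      then have "n - Suc p < n - p" using copy by linarith
      then show ?thesis using copy False unfolding h_def by (simp add: sig_copy)
    qed
  next
    case (terminal i p)
    then show ?thesis using x(2) unfolding vertex_reps_def terminal_darts_def by auto
  next
    case (outer j)
    then have "j \<noteq> 0" using x(2) unfolding vertex_reps_def by auto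
    then have "sig x = (None, j - 1)" using outer by (simp add: sig_outer mod_if)
    then show ?thesis using outer \<open>j \<noteq> 0\<close> unfolding vertex_reps_def h_def by (cases "j = 1") auto
  qed
  then show ?thesis by (intro funpow_reaches_by_rank[where h = h]) (auto intro: sig_maps)
qed

lemma card_vertex_reps: "card vertex_reps = M + card terminal_darts + 1"
proof -
  let ?A = "(\<lambda>i. (Some (2 * i), 0::nat)) ` {..<M}"
  have cA: "card ?A = M" by (simp add: card_image inj_on_def)
  have d1: "?A \<inter> terminal_darts = {}" unfolding terminal_darts_def using copy_neq_terminal
    by auto
  have d2: "?A \<inter> {(None, 0)} = {}" by auto
  have d3: "terminal_darts \<inter> {(None, 0)} = {}" unfolding terminal_darts_def by auto
  have "card (?A \<union> terminal_darts \<union> {(None, 0)}) = card ?A + card terminal_darts + card {(None, 0::nat)}"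
    using card_Un3_disjoint[OF _ finite_terminal_darts _ d1 d2 d3] by simp
  then show ?thesis unfolding vertex_reps_def using cA by simp
qed

lemma num_orbits_sig: "num_orbits sig D = M + card terminal_darts + 1"
  using num_orbits_eq_card_reps[OF finite_D _ sig_inj vertex_reps_subset _ inj_on_fst_vertex_reps reach_vertex_reps] sig_maps fst_sig card_vertex_reps
  by auto

lemma edge_reps_subset: "edge_reps \<subseteq> D" unfolding edge_reps_def
  using copy_dart r_lt terminal_darts_subset outer_dart by auto

lemma edge_reps_copy_port: "(Some (2 * k), q) \<in> edge_reps \<Longrightarrow> q = r"
  unfolding edge_reps_def terminal_darts_def using copy_neq_terminal by auto

lemma alpha_notin_edge_reps: assumes bR: "b \<in> edge_reps" shows "alpha b \<notin> edge_reps"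
proof -
  have "\<exists>k q. alpha b = (Some (2 * k), q) \<and> q \<noteq> r"
  proof -
    consider (a) i where "b = (Some (2 * i), r)" | (b) i p where "b = (Some (terminal i p), 0)" "p < n" "\<not> used_port i p"
      | (c) j where "b = (None, j)"
    proof -
      have "b \<in> (\<lambda>i. (Some (2 * i), r)) ` {..<M} \<or> b \<in> terminal_darts \<or> b \<in> (\<lambda>j. (None, j)) ` {..<N}"
        using bR unfolding edge_reps_def by blast
      then show ?thesis using that by (auto elim!: terminal_dartsE)
    qed
    then show ?thesis
    proof cases
      case a then show ?thesis using alpha_copy_r l_ne_r by auto
    next
      case b then show ?thesis using alpha_terminal used_port_r by auto
    next
      case c then show ?thesis using alpha_outer d_ne_r by auto
    qed
  qed
  then obtain k q where "alpha b = (Some (2 * k), q)" "q \<noteq> r" by blast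
  then show ?thesis using edge_reps_copy_port[of k q] by auto
qed

lemma inj_on_edge_edge_reps: "inj_on (\<lambda>x. {x, alpha x}) edge_reps"
proof (rule inj_onI)
  fix a b assume ab: "a \<in> edge_reps" "b \<in> edge_reps" "{a, alpha a} = {b, alpha b}"
  then have "a = b \<or> a = alpha b" by (metis doubleton_eq_iff)
  then show "a = b"
  proof
    assume "a = alpha b" then have False using alpha_notin_edge_reps[OF ab(2)] ab(1) by simp
    then show ?thesis ..
  qed
qed

lemma reach_edge_reps: "\<forall>x\<in>D. \<exists>k. (alpha ^^ k) x \<in> edge_reps"
proof (rule funpow_reaches_by_rank[where h = "\<lambda>x. 0"])
  show "\<forall>x\<in>D. alpha x \<in> D" using alpha_maps by auto
  show "\<forall>x\<in>D. x \<notin> edge_reps \<longrightarrow> alpha x \<in> edge_reps \<or> (0::nat) < 0"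
  proof (intro ballI impI)
    fix x assume x: "x \<in> D" "x \<notin> edge_reps"
    from x(1) show "alpha x \<in> edge_reps \<or> (0::nat) < 0"
    proof (cases rule: dart_cases)
      case (copy i p)
      then have "p \<noteq> r" using x(2) unfolding edge_reps_def by auto
      show ?thesis
      proof (cases "used_port i p")
        case True
        then have "p = l \<or> (p = d \<and> dangling i)" using \<open>p \<noteq> r\<close>
          unfolding used_port_def by auto
        then show ?thesis
        proof
          assume "p = l" then show ?thesis using copy alpha_copy_l modM_lt unfolding edge_reps_def
            by auto
        next
          assume "p = d \<and> dangling i" then show ?thesis using copy alpha_copy_d div2_lt
            unfolding edge_reps_def by auto
        qed
      next
        case False then show ?thesis using copy alpha_copy_unused
          unfolding edge_reps_def terminal_darts_def by auto
      qed
    next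
      case (terminal i p) then show ?thesis using x(2) unfolding edge_reps_def terminal_darts_def
        by auto
    next
      case (outer j) then show ?thesis using x(2) unfolding edge_reps_def by auto
    qed
  qed
qed

lemma card_edge_reps: "card edge_reps = M + card terminal_darts + N"
proof -
  let ?A = "(\<lambda>i. (Some (2 * i), r)) ` {..<M}"
  let ?C = "(\<lambda>j. (None :: nat option, j)) ` {..<N}"
  have cA: "card ?A = M" by (simp add: card_image inj_on_def)
  have cC: "card ?C = N" by (simp add: card_image inj_on_def)
  have d1: "?A \<inter> terminal_darts = {}" unfolding terminal_darts_def using copy_neq_terminal
    by auto
  have d2: "?A \<inter> ?C = {}" by auto
  have d3: "terminal_darts \<inter> ?C = {}" unfolding terminal_darts_def by auto
  have "card (?A \<union> terminal_darts \<union> ?C) = card ?A + card terminal_darts + card ?C"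
    using card_Un3_disjoint[OF _ finite_terminal_darts _ d1 d2 d3] by simp
  then show ?thesis unfolding edge_reps_def using cA cC by simp
qed

lemma num_orbits_alpha: "num_orbits alpha D = M + card terminal_darts + N"
proof -
  have "\<forall>x\<in>D. {alpha x, alpha (alpha x)} = {x, alpha x}" using alpha_involution by auto
  then show ?thesis
    using num_orbits_eq_card_reps[OF finite_D _ alpha_inj edge_reps_subset _ inj_on_edge_edge_reps reach_edge_reps] alpha_maps card_edge_reps
    by auto
qed

subsection \<open>Connectivity and planarity\<close>

abbreviation "adj \<equiv> {(x, sig x) | x. x \<in> D} \<union> {(x, alpha x) | x. x \<in> D}
        \<union> {(sig x, x) | x. x \<in> D} \<union> {(alpha x, x) | x. x \<in> D}"

lemma adj_sig: "x \<in> D \<Longrightarrow> (x, sig x) \<in> adj"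
  by (cases x) blast
lemma adj_alpha: "x \<in> D \<Longrightarrow> (x, alpha x) \<in> adj"
  by (cases x) blast

lemma adj_phi: "x \<in> D \<Longrightarrow> (x, phi x) \<in> adj\<^sup>*"
proof -
  assume x: "x \<in> D"
  have 1: "(x, alpha x) \<in> adj" using x by (rule adj_alpha)
  have 2: "(alpha x, sig (alpha x)) \<in> adj" using alpha_maps[OF x] by (rule adj_sig)
  have "(x, sig (alpha x)) \<in> adj\<^sup>*" using 1 2
    by (meson r_into_rtrancl rtrancl_into_rtrancl)
  then show ?thesis by simp
qed

lemma adj_funpow_phi: "x \<in> D \<Longrightarrow> (x, (phi ^^ k) x) \<in> adj\<^sup>*"
proof (induction k)
  case 0 then show ?case by simp
next
  case (Suc k)
  have "(phi ^^ k) x \<in> D" using funpow_closed[of D phi x k] phi_maps Suc.prems by blast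
  then have "((phi ^^ k) x, phi ((phi ^^ k) x)) \<in> adj\<^sup>*" by (rule adj_phi)
  then have "(x, phi ((phi ^^ k) x)) \<in> adj\<^sup>*" using Suc.IH[OF Suc.prems]
    by (rule rtrancl_trans[rotated])
  then show ?case by (simp add: comp_def)
qed

lemma outer_connected: "j < N \<Longrightarrow> ((None, j), (None, 0)) \<in> adj\<^sup>*"
proof (induction j)
  case 0 then show ?case by simp
next
  case (Suc j)
  have e: "Suc j + N - 1 = j + N" by simp
  have s: "sig (None, Suc j) = (None, j)" unfolding sig_outer e using Suc.prems by simp
  have "(None, Suc j) \<in> D" using Suc.prems by (rule outer_dart)
  then have "((None, Suc j), sig (None, Suc j)) \<in> adj" by (rule adj_sig)
  then have 1: "((None, Suc j), (None, j)) \<in> adj" unfolding s .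
  have 2: "((None, j), (None, 0)) \<in> adj\<^sup>*" using Suc by simp
  show ?case by (rule converse_rtrancl_into_rtrancl[OF 1 2])
qed

lemma face_funpow: "x \<in> D \<Longrightarrow> face ((phi ^^ k) x) = face x"
proof (induction k)
  case 0 then show ?case by simp
next
  case (Suc k)
  have "(phi ^^ k) x \<in> D" using funpow_closed[of D phi x k] phi_maps Suc.prems by blast
  then have a: "face (phi ((phi ^^ k) x)) = face ((phi ^^ k) x)" by (rule face_phi)
  then show ?case using Suc.IH[OF Suc.prems] by (simp add: comp_def)
qed

lemma reach_outer: "x \<in> D \<Longrightarrow> face x \<noteq> N \<Longrightarrow> \<exists>k j. (phi ^^ k) x = (None, j) \<and> j < N"
proof -
  assume x: "x \<in> D" and f: "face x \<noteq> N"
  obtain k where k: "(phi ^^ k) x \<in> face_reps" using reach_face_reps x by blast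
  have "face ((phi ^^ k) x) \<noteq> N" using face_funpow[OF x] f by simp
  moreover have "face (Some 0, l) = N" using face_copy[of 0 l] offset_l
    unfolding face_at_def inner_offset_def by simp
  ultimately have "(phi ^^ k) x \<noteq> (Some 0, l)" by auto
  then show ?thesis using k unfolding face_reps_def by auto
qed

lemma connected_outer: "x \<in> D \<Longrightarrow> (x, (None, 0)) \<in> adj\<^sup>*"
proof -
  assume x: "x \<in> D"
  obtain k where k: "(phi ^^ k) x \<in> face_reps" using reach_face_reps x by blast
  have xk: "(x, (phi ^^ k) x) \<in> adj\<^sup>*" by (rule adj_funpow_phi[OF x])
  have "((phi ^^ k) x, (None, 0)) \<in> adj\<^sup>*"
  proof (cases "(phi ^^ k) x = (Some 0, l)")
    case True
    have s: "sig (Some 0, l) = (Some 0, d)" using sig_copy[of 0 l] Suc_l_mod by simp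
    have l0: "(Some 0, l) \<in> D" using copy_dart[of 0 l] M_pos l_lt by simp
    have d0: "(Some 0, d) \<in> D" using copy_dart[of 0 d] M_pos d_lt by simp
    have "((Some 0, l), sig (Some 0, l)) \<in> adj" using l0 by (rule adj_sig)
    then have 1: "((Some 0, l), (Some 0, d)) \<in> adj" unfolding s .
    have "face (Some 0, d) = N - 1"
      using face_copy[of 0 d] offset_d not_inner_offset_1 dangling_below_0 N_ge_1
        unfolding face_at_def dangling_upto_def by simp
    then have "face (Some 0, d) \<noteq> N" using N_ge_1 by simp
    then obtain k' j where kj: "(phi ^^ k') (Some 0, d) = (None, j)" "j < N"
      using reach_outer[OF d0] by blast
    have 2: "((Some 0, d), (None, j)) \<in> adj\<^sup>*" using adj_funpow_phi[OF d0, of k']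
      unfolding kj(1) .
    have 3: "((Some 0, d), (None, 0)) \<in> adj\<^sup>*" using 2 outer_connected[OF kj(2)]
      by (rule rtrancl_trans)
    show ?thesis unfolding True by (rule converse_rtrancl_into_rtrancl[OF 1 3])
  next
    case False
    then obtain j where "(phi ^^ k) x = (None, j)" "j < N" using k unfolding face_reps_def by auto
    then show ?thesis using outer_connected by simp
  qed
  then show ?thesis using xk by (rule rtrancl_trans[rotated])
qed

lemma num_components_ring: "num_components sig alpha D = 1"
proof -
  have "0 < N" using N_ge_1 by simp
  then show ?thesis by (rule num_components_eq_1[OF outer_dart]) (use connected_outer in auto)
qed

lemma planar_ring: "planar_sim verts lab N alpha"
  unfolding planar_sim_def Let_def
    using num_orbits_phi num_orbits_sig num_orbits_alpha num_components_ring by simp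

subsection \<open>Satisfying assignments\<close>

text \<open>In assignment t copy 0 is in state X iff t, and the states alternate around the ring.\<close>

definition "is_head t i p \<longleftrightarrow> ((t \<noteq> odd i) \<longleftrightarrow> p \<in> X)"
definition "assignment t = {(Some (2 * i), p) | i p. i < M \<and> p < n \<and> is_head t i p}
   \<union> {(Some (terminal i p), 0) | i p. i < M \<and> p < n \<and> \<not> used_port i p \<and> \<not> is_head t i p}
   \<union> {(None, j) | j. j < N \<and> \<not> is_head t (edge_copy j) d}"

lemma assignment_iff: "x \<in> assignment t \<longleftrightarrow> (\<exists>i p. x = (Some (2 * i), p) \<and> i < M \<and> p < n \<and> is_head t i p)
   \<or> (\<exists>i p. x = (Some (terminal i p), 0) \<and> i < M \<and> p < n \<and> \<not> used_port i p \<and> \<not> is_head t i p)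
   \<or> (\<exists>j. x = (None, j) \<and> j < N \<and> \<not> is_head t (edge_copy j) d)"
  unfolding assignment_def by blast

lemma assignment_copy: assumes "i < M" "p < n" shows "(Some (2 * i), p) \<in> assignment t \<longleftrightarrow> is_head t i p"
proof -
  have "\<not> (\<exists>i' p'. (Some (2 * i), p) = (Some (terminal i' p'), 0::nat))"
    using copy_neq_terminal by simp
  then show ?thesis unfolding assignment_iff using assms by auto
qed

lemma assignment_terminal: assumes "i < M" "p < n" shows "(Some (terminal i p), 0) \<in> assignment t \<longleftrightarrow> \<not> is_head t i p \<and> \<not> used_port i p"
proof -
  have "\<not> (\<exists>i' p'. (Some (terminal i p), 0::nat) = (Some (2 * i'), p'))"
    using terminal_neq_copy by simp
  moreover have "(\<exists>i' p'. (Some (terminal i p), 0::nat) = (Some (terminal i' p'), 0) \<and> i' < M \<and> p' < n \<and> \<not> used_port i' p' \<and> \<not> is_head t i' p')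
     \<longleftrightarrow> \<not> is_head t i p \<and> \<not> used_port i p"
    using terminal_inj assms by auto
  ultimately show ?thesis unfolding assignment_iff by auto
qed

lemma assignment_outer: "(None, j) \<in> assignment t \<longleftrightarrow> j < N \<and> \<not> is_head t (edge_copy j) d"
  unfolding assignment_iff by auto

lemma assignment_subset: "assignment t \<subseteq> D"
proof
  fix x assume "x \<in> assignment t"
  then show "x \<in> D" unfolding assignment_iff using copy_dart terminal_dart outer_dart by auto
qed

lemma odd_Suc_mod_M: assumes "i < M" shows "odd (Suc i mod M) \<longleftrightarrow> \<not> odd i"
proof (cases "Suc i = M")
  case True
  then have "even (Suc i)" using M_even by simp
  then have "odd i" by simp
  then show ?thesis using True by simp
next
  case False then show ?thesis using assms by simp
qed
lemma odd_pred_mod_M: "i < M \<Longrightarrow> odd ((i + M - 1) mod M) \<longleftrightarrow> \<not> odd i"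
proof (cases "i = 0")
  case True
  then have "(i + M - 1) mod M = M - 1" using M_pos by simp
  then show ?thesis using True M_even M_pos by simp
next
  case False
  assume i: "i < M"
  have e: "i + M - 1 = (i - 1) + M" using False by simp
  have "(i - 1 + M) mod M = (i - 1) mod M" by (rule mod_add_self2)
  also have "\<dots> = i - 1" using i by (intro mod_less) linarith
  finally have "(i + M - 1) mod M = i - 1" using e by simp
  then show ?thesis using False by (cases i) auto
qed

lemma assignment_edge: assumes x: "x \<in> D" shows "x \<in> assignment t \<longleftrightarrow> alpha x \<notin> assignment t"
  using x
proof (cases rule: dart_cases)
  case (copy i p)
  show ?thesis
  proof (cases "used_port i p")
    case True
    then consider "p = r" | "p = l" | "p = d \<and> dangling i" unfolding used_port_def by blast
    then show ?thesis
    proof cases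
      case 1
      have a: "alpha x = (Some (2 * (Suc i mod M)), l)" using copy 1 alpha_copy_r by simp
      have b: "x \<in> assignment t \<longleftrightarrow> is_head t i r"
        using assignment_copy[OF copy(2) r_lt] copy 1 by simp
      have c: "alpha x \<in> assignment t \<longleftrightarrow> is_head t (Suc i mod M) l"
        using assignment_copy[OF modM_lt l_lt] a by simp
      have "is_head t (Suc i mod M) l \<longleftrightarrow> \<not> is_head t i r"
        using odd_Suc_mod_M[OF copy(2)] l_r_same_side unfolding is_head_def by auto
      then show ?thesis using b c by simp
    next
      case 2
      have a: "alpha x = (Some (2 * ((i + M - 1) mod M)), r)" using copy 2 alpha_copy_l by simp
      have b: "x \<in> assignment t \<longleftrightarrow> is_head t i l"
        using assignment_copy[OF copy(2) l_lt] copy 2 by simp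
      have c: "alpha x \<in> assignment t \<longleftrightarrow> is_head t ((i + M - 1) mod M) r"
        using assignment_copy[OF modM_lt r_lt] a by simp
      have "is_head t ((i + M - 1) mod M) r \<longleftrightarrow> \<not> is_head t i l"
        using odd_pred_mod_M[OF copy(2)] l_r_same_side unfolding is_head_def by auto
      then show ?thesis using b c by simp
    next
      case 3
      then show ?thesis
        using copy alpha_copy_d assignment_copy assignment_outer edge_copy_dangling div2_lt by auto
    qed
  next
    case False then show ?thesis using copy alpha_copy_unused assignment_copy assignment_terminal
      by auto
  qed
next
  case (terminal i p) then show ?thesis using alpha_terminal assignment_copy assignment_terminal
    by auto
next
  case (outer j) then show ?thesis
    using alpha_outer assignment_copy assignment_outer edge_copy_lt d_lt by auto
qed

lemma vert_cases:
  assumes "v \<in> verts"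
  obtains (copy) i where "v = 2 * i" "i < M" | (terminal) i p where "v = terminal i p" "i < M" "p < n" "\<not> used_port i p"
  using assms unfolding verts_def by auto

lemma sat_assignment_assignment: "sat_assignment verts lab N alpha (assignment t)"
  unfolding sat_assignment_def
proof (intro conjI ballI)
  show "assignment t \<subseteq> D" by (rule assignment_subset)
  fix x assume "x \<in> D" then show "x \<in> assignment t \<longleftrightarrow> alpha x \<notin> assignment t"
    by (rule assignment_edge)
next
  fix v assume "v \<in> verts"
  then show "{i. i < nports (lab v) \<and> (Some v, i) \<in> assignment t} \<in> constr (lab v)"
  proof (cases rule: vert_cases)
    case (copy i)
    have "{k. k < n \<and> (Some (2 * i), k) \<in> assignment t} = (if t \<noteq> odd i then X else {..<n} - X)"
      using assignment_copy[OF copy(2)] Xsub unfolding is_head_def by auto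
    then show ?thesis using copy by (simp add: constr_fan_gadget)
  next
    case (terminal i p)
    have "{k. k < 1 \<and> (Some (terminal i p), k) \<in> assignment t} \<subseteq> {0}" by auto
    then have "{k. k < 1 \<and> (Some (terminal i p), k) \<in> assignment t} = {} \<or> {k. k < 1 \<and> (Some (terminal i p), k) \<in> assignment t} = {0}"
      by blast
    then show ?thesis using terminal by (auto simp: constr_free_terminal)
  qed
qed

lemma sat_assignment_copies:
  assumes sat: "sat_assignment verts lab N alpha H"
  obtains t where "\<And>i k. i < M \<Longrightarrow> k < n \<Longrightarrow> (Some (2 * i), k) \<in> H \<longleftrightarrow> is_head t i k"
proof -
  have edge: "\<forall>x\<in>D. x \<in> H \<longleftrightarrow> alpha x \<notin> H"
    and vc: "\<forall>v\<in>verts. {i. i < nports (lab v) \<and> (Some v, i) \<in> H} \<in> constr (lab v)"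
    using sat unfolding sat_assignment_def by auto
  define b where "b i \<longleftrightarrow> {k. k < n \<and> (Some (2 * i), k) \<in> H} = X" for i
  have mem_copy: "(Some (2 * i), k) \<in> H \<longleftrightarrow> (b i \<longleftrightarrow> k \<in> X)" if "i < M" "k < n" for i k
  proof -
    have "2 * i \<in> verts" unfolding verts_def using that by auto
    then have "{k. k < nports (lab (2 * i)) \<and> (Some (2 * i), k) \<in> H} \<in> constr (lab (2 * i))"
      using vc by blast
    then have "{k. k < n \<and> (Some (2 * i), k) \<in> H} \<in> {X, {..<n} - X}"
      by (simp add: constr_fan_gadget)
    then show ?thesis using that unfolding b_def by auto
  qed
  have alternate: "b (Suc i) \<longleftrightarrow> \<not> b i" if "Suc i < M" for i
  proof -
    have "(Some (2 * i), r) \<in> D" using copy_dart that r_lt by simp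
    moreover have "alpha (Some (2 * i), r) = (Some (2 * Suc i), l)" using alpha_copy_r that by simp
    ultimately have "(Some (2 * i), r) \<in> H \<longleftrightarrow> (Some (2 * Suc i), l) \<notin> H"
      using edge by simp
    then show ?thesis using mem_copy[of i r] mem_copy[of "Suc i" l] that r_lt l_lt l_r_same_side
      by auto
  qed
  have parity: "b i \<longleftrightarrow> (b 0 \<noteq> odd i)" if "i < M" for i
    using that by (induction i) (auto simp: alternate)
  show ?thesis
  proof (rule that)
    fix i k assume "i < M" "k < n"
    then show "(Some (2 * i), k) \<in> H \<longleftrightarrow> is_head (b 0) i k"
      using mem_copy[of i k] parity[of i] unfolding is_head_def by auto
  qed
qed

lemma sat_assignment_is_assignment:
  assumes sat: "sat_assignment verts lab N alpha H"
  shows "\<exists>t. H = assignment t"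
proof -
  have H_sub: "H \<subseteq> D" and edge: "\<forall>x\<in>D. x \<in> H \<longleftrightarrow> alpha x \<notin> H"
    using sat unfolding sat_assignment_def by auto
  obtain t where mem_copy: "\<And>i k. i < M \<Longrightarrow> k < n \<Longrightarrow> (Some (2 * i), k) \<in> H \<longleftrightarrow> is_head t i k"
    using sat_assignment_copies[OF sat] by blast
  have "x \<in> H \<longleftrightarrow> x \<in> assignment t" if x: "x \<in> D" for x
    using x
  proof (cases rule: dart_cases)
    case (copy i p) then show ?thesis using mem_copy assignment_copy by auto
  next
    case (terminal i p)
    then have "x \<in> H \<longleftrightarrow> (Some (2 * i), p) \<notin> H"
      using edge x alpha_terminal by auto
    then show ?thesis using terminal mem_copy assignment_terminal by auto
  next
    case (outer j)
    then have "x \<in> H \<longleftrightarrow> (Some (2 * edge_copy j), d) \<notin> H"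
      using edge x alpha_outer by auto
    then show ?thesis using outer mem_copy[of "edge_copy j" d] assignment_outer edge_copy_lt d_lt
      by auto
  qed
  then have "H = assignment t" using H_sub assignment_subset by blast
  then show ?thesis by blast
qed

lemma inward_assignment: "inward N (assignment t) = {j. j < N \<and> ((t \<noteq> (j \<in> Y)) \<longleftrightarrow> d \<in> X)}"
  unfolding inward_def using assignment_outer edge_copy_odd unfolding is_head_def by auto

lemma inward_assignments: "{inward N (assignment t) | t. True} = {Y, {..<N} - Y}"
proof -
  have a: "inward N (assignment (d \<notin> X)) = Y" unfolding inward_assignment using Ysub by auto
  have b: "inward N (assignment (d \<in> X)) = {..<N} - Y" unfolding inward_assignment by auto
  have "inward N (assignment t) \<in> {Y, {..<N} - Y}" for t using a b
    by (cases "t = (d \<in> X)") auto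
  then show ?thesis using a b by blast
qed

lemma simulated_gadget_ring: "simulated_gadget verts lab N alpha = (N, {Y, {..<N} - Y})"
proof -
  have "{inward N H | H. sat_assignment verts lab N alpha H} = {inward N (assignment t) | t. True}"
    using sat_assignment_is_assignment sat_assignment_assignment by blast
  then show ?thesis unfolding simulated_gadget_def inward_assignments by simp
qed

lemma inward_assignment_inj: "inward N (assignment t1) = inward N (assignment t2) \<Longrightarrow> t1 = t2"
proof -
  assume e: "inward N (assignment t1) = inward N (assignment t2)"
  have "0 < N" using N_ge_1 by simp
  then have "(0 \<in> inward N (assignment t1)) = (0 \<in> inward N (assignment t2))" using e
    by simp
  then show ?thesis unfolding inward_assignment using \<open>0 < N\<close> by auto
qed

lemma parsimonious_ring: "parsimonious verts lab N alpha"
  unfolding parsimonious_def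
proof
  fix Z assume "Z \<in> constr (simulated_gadget verts lab N alpha)"
  then obtain H where H: "sat_assignment verts lab N alpha H" "inward N H = Z"
    unfolding simulated_gadget_def constr_def by auto
  show "\<exists>!H. sat_assignment verts lab N alpha H \<and> inward N H = Z"
  proof (rule ex1I[of _ H])
    show "sat_assignment verts lab N alpha H \<and> inward N H = Z" using H by simp
    fix H' assume H': "sat_assignment verts lab N alpha H' \<and> inward N H' = Z"
    obtain t where t: "H = assignment t" using sat_assignment_is_assignment H(1) by blast
    obtain t' where t': "H' = assignment t'" using sat_assignment_is_assignment H' by blast
    have "t' = t" using inward_assignment_inj H H' t t' by metis
    then show "H' = H" using t t' by simp
  qed
qed

lemma planar_pars_simulates_ring:
  "planar_pars_simulates {fan_gadget, free_terminal} (N, {Y, {..<N} - Y})"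
proof -
  have "wf_gadget (N, {Y, {..<N} - Y})"
    using Ysub unfolding wf_gadget_def nports_def constr_def by auto
  then show ?thesis
    unfolding planar_pars_simulates_def simulated_gadget_ring[symmetric]
    using is_simulation_ring planar_ring parsimonious_ring gadget_iso_refl by blast
qed

end

section \<open>Simulating fanouts and the NOT gate\<close>

lemma generalized_fanoutE:
  assumes "generalized_fanout F"
  obtains X where "3 \<le> nports F" "X \<subseteq> {..<nports F}" "F = (nports F, {X, {..<nports F} - X})"
  using assms unfolding generalized_fanout_def nports_def constr_def by (auto simp: prod_eq_iff)

lemma same_side_ports:
  fixes X :: "nat set"
  assumes n_ge_3: "3 \<le> n"
  shows "\<exists>l dl. l < n \<and> 2 \<le> dl \<and> dl < n \<and> (l \<in> X \<longleftrightarrow> (l + dl) mod n \<in> X)"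
proof -
  consider "0 \<in> X \<longleftrightarrow> 2 \<in> X" | "1 \<in> X \<longleftrightarrow> 0 \<in> X" | "2 \<in> X \<longleftrightarrow> 1 \<in> X"
    by blast
  then show ?thesis
  proof cases
    case 1
    have "(0 + 2) mod n = 2" using n_ge_3 by simp
    then have "0 < n \<and> 2 \<le> (2::nat) \<and> 2 < n \<and> (0 \<in> X \<longleftrightarrow> (0 + 2) mod n \<in> X)"
      using n_ge_3 1 by (simp only:) simp
    then show ?thesis by blast
  next
    case 2
    have "(1 + (n - 1)) mod n = 0" using n_ge_3 by simp
    then have "1 < n \<and> 2 \<le> n - 1 \<and> n - 1 < n \<and> (1 \<in> X \<longleftrightarrow> (1 + (n - 1)) mod n \<in> X)"
      using n_ge_3 2 by simp
    then show ?thesis by blast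
  next
    case 3
    have "(2 + (n - 1)) mod n = 1" using n_ge_3 by (simp add: mod_if)
    then have "2 < n \<and> 2 \<le> n - 1 \<and> n - 1 < n \<and> (2 \<in> X \<longleftrightarrow> (2 + (n - 1)) mod n \<in> X)"
      using n_ge_3 3 by simp
    then show ?thesis by blast
  qed
qed

lemma planar_pars_simulates_complementary:
  assumes F: "generalized_fanout F" and N_ge_1: "1 \<le> N" and Ysub: "Y \<subseteq> {..<N}"
  shows "planar_pars_simulates {F, free_terminal} (N, {Y, {..<N} - Y})"
proof -
  obtain X where n_ge_3: "3 \<le> nports F" and Xsub: "X \<subseteq> {..<nports F}"
    and F_eq: "F = (nports F, {X, {..<nports F} - X})"
    using F by (rule generalized_fanoutE)
  obtain l dl where "l < nports F" "2 \<le> dl" "dl < nports F"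
    "l \<in> X \<longleftrightarrow> (l + dl) mod nports F \<in> X"
    using same_side_ports[OF n_ge_3] by blast
  then interpret fanout_ring "nports F" X l dl N Y
    by unfold_locales (use n_ge_3 Xsub N_ge_1 Ysub in auto)
  have "fan_gadget = F" unfolding fan_gadget_def using F_eq by simp
  then show ?thesis using planar_pars_simulates_ring by simp
qed

theorem mainTheorem12:
  assumes "generalized_fanout F"
  shows "planar_pars_simulates {F, free_terminal} not_gate \<and>
         (\<forall>F'. generalized_fanout F' \<longrightarrow> planar_pars_simulates {F, free_terminal} F') \<and>
         (\<forall>k::nat. k \<ge> 1 \<longrightarrow> planar_pars_simulates {F, free_terminal} (fanout k))"
proof (intro conjI allI impI)
  have "not_gate = (2, {{}, {..<2} - {}})" unfolding not_gate_def by auto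
  then show "planar_pars_simulates {F, free_terminal} not_gate"
    using planar_pars_simulates_complementary[OF assms, of 2 "{}"] by simp
next
  fix F' assume "generalized_fanout F'"
  then obtain X where "3 \<le> nports F'" "X \<subseteq> {..<nports F'}"
    and F'_eq: "F' = (nports F', {X, {..<nports F'} - X})"
    by (rule generalized_fanoutE)
  then have "planar_pars_simulates {F, free_terminal} (nports F', {X, {..<nports F'} - X})"
    by (intro planar_pars_simulates_complementary[OF assms]) auto
  then show "planar_pars_simulates {F, free_terminal} F'" using F'_eq by simp
next
  fix k :: nat assume "k \<ge> 1"
  have "fanout k = (k + 1, {{0}, {..<k + 1} - {0}})" unfolding fanout_def by auto
  then show "planar_pars_simulates {F, free_terminal} (fanout k)"
    using planar_pars_simulates_complementary[OF assms, of "k + 1" "{0}"] by simp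
qed

end
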